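(* Let $[Q,P]$ be a dynamical structure function ($Q$ $p\times p$, $P$ $p\times m$, strictly proper) and assume $[I-Q,\ P]$ has only simple poles and has no common poles and zeros. Let $N(s)=C_2(A_2-sI)^{-1}B_2+I$ be a diagonal $p\times p$ transfer matrix (with minimal realisation where $A_2=\mathrm{diag}[a_1,\ldots,a_k]$, $B_2=\mathrm{diag}[b_1,\ldots,b_k]$, $C_2=\mathrm{diag}[c_1,\ldots,c_k]$ obtained by stacking Gilbert realisations of the diagonal entries, each $a_m$ diagonal). If a zero $\lambda_i$ of $[I-Q,\ P]$ with zero direction $v_i^T$ (i.e. $v_i^T[I-Q(\lambda_i),\ P(\lambda_i)]=0$) is cancelled by cascading $N(s)$ (forming $N(s)[I-Q,\ P]$), then $N[j,j](s)$ has a pole at $\lambda_i$ for every $j$ such that $\mathcal{B}(v_i^T)[j]\neq 0$, where $\mathcal{B}(\cdot)$ maps a matrix/vector to its Boolean (zero/nonzero) pattern. *)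

theory Defs
  imports "HOL-Complex_Analysis.Complex_Analysis" "HOL-Computational_Algebra.Polynomial"
begin

text \<open>Scalar transfer functions are complex functions; all notions (poles, values, zeros)
  are taken through the punctured filter at a point, so values at singular points are irrelevant.\<close>

definition rat_fun :: "(complex \<Rightarrow> complex) \<Rightarrow> bool" where
  "rat_fun f \<longleftrightarrow> (\<exists>pn pd :: complex poly. pd \<noteq> 0 \<and>
      (\<forall>s. poly pd s \<noteq> 0 \<longrightarrow> f s = poly pn s / poly pd s))"

definition strictly_proper :: "(complex \<Rightarrow> complex) \<Rightarrow> bool" where
  "strictly_proper f \<longleftrightarrow> (f \<longlongrightarrow> 0) at_infinity"

definition dyn_struct_fun ::
  "nat \<Rightarrow> nat \<Rightarrow> (nat \<Rightarrow> nat \<Rightarrow> complex \<Rightarrow> complex) \<Rightarrow> (nat \<Rightarrow> nat \<Rightarrow> complex \<Rightarrow> complex) \<Rightarrow> bool" where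
  "dyn_struct_fun p m Q P \<longleftrightarrow>
     (\<forall>i<p. \<forall>j<p. rat_fun (Q i j) \<and> strictly_proper (Q i j)) \<and>
     (\<forall>i<p. Q i i = (\<lambda>s. 0)) \<and>
     (\<forall>i<p. \<forall>j<m. rat_fun (P i j) \<and> strictly_proper (P i j))"

definition IQP :: "nat \<Rightarrow> (nat \<Rightarrow> nat \<Rightarrow> complex \<Rightarrow> complex) \<Rightarrow> (nat \<Rightarrow> nat \<Rightarrow> complex \<Rightarrow> complex)
   \<Rightarrow> nat \<Rightarrow> nat \<Rightarrow> complex \<Rightarrow> complex" where
  "IQP p Q P i c s = (if c < p then (if i = c then 1 else 0) - Q i c s else P i (c - p) s)"

definition tmat_mult :: "nat \<Rightarrow> (nat \<Rightarrow> nat \<Rightarrow> complex \<Rightarrow> complex) \<Rightarrow> (nat \<Rightarrow> nat \<Rightarrow> complex \<Rightarrow> complex)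
   \<Rightarrow> nat \<Rightarrow> nat \<Rightarrow> complex \<Rightarrow> complex" where
  "tmat_mult k A B i j s = (\<Sum>l<k. A i l s * B l j s)"

definition only_simple_poles :: "nat \<Rightarrow> nat \<Rightarrow> (nat \<Rightarrow> nat \<Rightarrow> complex \<Rightarrow> complex) \<Rightarrow> bool" where
  "only_simple_poles r n H \<longleftrightarrow> (\<forall>i<r. \<forall>c<n. \<forall>z. is_pole (H i c) z \<longrightarrow>
      (\<exists>L. ((\<lambda>s. (s - z) * H i c s) \<longlongrightarrow> L) (at z)))"

definition is_tm_pole :: "nat \<Rightarrow> nat \<Rightarrow> (nat \<Rightarrow> nat \<Rightarrow> complex \<Rightarrow> complex) \<Rightarrow> complex \<Rightarrow> bool" where
  "is_tm_pole r n H z \<longleftrightarrow> (\<exists>i<r. \<exists>c<n. is_pole (H i c) z)"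

text \<open>Left (output) zero of an r x n transfer matrix H at z: there is a rational row vector
  w(s), analytic at z with w(z) \<noteq> 0, such that w(s)^T H(s) is analytic at z and vanishes there.
  When H has no pole at z this is exactly: exists v \<noteq> 0 with v^T H(z) = 0.\<close>
definition is_tm_zero :: "nat \<Rightarrow> nat \<Rightarrow> (nat \<Rightarrow> nat \<Rightarrow> complex \<Rightarrow> complex) \<Rightarrow> complex \<Rightarrow> bool" where
  "is_tm_zero r n H z \<longleftrightarrow> (\<exists>w :: nat \<Rightarrow> complex \<Rightarrow> complex.
      (\<forall>i<r. rat_fun (w i) \<and> (\<exists>c. (w i \<longlongrightarrow> c) (at z))) \<and>
      (\<exists>i<r. \<not> (w i \<longlongrightarrow> 0) (at z)) \<and>
      (\<forall>c<n. ((\<lambda>s. \<Sum>i<r. w i s * H i c s) \<longlongrightarrow> 0) (at z)))"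

definition bool_pattern :: "(nat \<Rightarrow> complex) \<Rightarrow> nat \<Rightarrow> bool" where
  "bool_pattern v j \<longleftrightarrow> v j \<noteq> 0"

end

theory Submission
  imports Defs
begin

text \<open>Write each diagonal entry of the cascaded filter near \<open>\<lambda>\<close> as
  \<open>(s - \<lambda>)\<^sup>k\<^sub>i / (s - \<lambda>)\<^sup>l\<^sub>i\<close> times a rational unit \<open>q\<^sub>i / r\<^sub>i\<close>.
  If some \<open>N\<^sub>j\<^sub>j\<close> with \<open>v\<^sub>j \<noteq> 0\<close> has no pole at \<open>\<lambda>\<close>, then among the entries on the support of
  \<open>v\<close> the largest excess order \<open>R = max (k\<^sub>i - l\<^sub>i)\<close> is nonnegative. The rational row vector
  \<open>w\<^sub>i = v\<^sub>i (s - \<lambda>)\<^bsup>R - (k\<^sub>i - l\<^sub>i)\<^esup> r\<^sub>i / q\<^sub>i\<close> is analytic at \<open>\<lambda>\<close>, does not vanish there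
  (at an index attaining the maximum), and satisfies \<open>w\<^sup>T N [I - Q, P] = (s - \<lambda>)\<^sup>R v\<^sup>T [I - Q, P]\<close>,
  which tends to \<open>0\<close>. So the zero would survive the cascade.
  The argument uses nothing about \<open>[I - Q, P]\<close> beyond the zero direction, nor about the
  realisation of \<open>N\<close> beyond its diagonal entries being nonzero rational functions.\<close>

definition rat_local_form ::
  "(complex \<Rightarrow> complex) \<Rightarrow> complex \<Rightarrow> nat \<Rightarrow> nat \<Rightarrow> complex poly \<Rightarrow> complex poly \<Rightarrow> bool" where
  "rat_local_form f z k l q r \<longleftrightarrow> poly q z \<noteq> 0 \<and> poly r z \<noteq> 0 \<and>
     (\<forall>\<^sub>F s in at z. f s = (s - z) ^ k * poly q s / ((s - z) ^ l * poly r s))"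

lemma poly_eq_power_order_mult:
  fixes f :: "complex poly"
  assumes "f \<noteq> 0"
  obtains q where "poly q z \<noteq> 0" "\<And>s. poly f s = (s - z) ^ order z f * poly q s"
proof -
  obtain q where q: "f = [:- z, 1:] ^ order z f * q" "\<not> [:- z, 1:] dvd q"
    using order_decomp[OF assms] by blast
  have "poly q z \<noteq> 0"
    using q(2) by (simp add: poly_eq_0_iff_dvd)
  moreover have "poly f s = (s - z) ^ order z f * poly q s" for s
    by (subst q(1)) (simp add: poly_power)
  ultimately show thesis by (rule that)
qed

lemma poly_ratio_rat_local_form:
  fixes f :: "complex \<Rightarrow> complex" and n d :: "complex poly"
  assumes "n \<noteq> 0" "d \<noteq> 0" and f: "\<And>s. poly d s \<noteq> 0 \<Longrightarrow> f s = poly n s / poly d s"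
  obtains k l q r where "rat_local_form f z k l q r"
proof -
  obtain q where q: "poly q z \<noteq> 0" "\<And>s. poly n s = (s - z) ^ order z n * poly q s"
    using poly_eq_power_order_mult[OF \<open>n \<noteq> 0\<close>] by blast
  obtain r where r: "poly r z \<noteq> 0" "\<And>s. poly d s = (s - z) ^ order z d * poly r s"
    using poly_eq_power_order_mult[OF \<open>d \<noteq> 0\<close>] by blast
  have "\<forall>\<^sub>F s in at z. poly r s \<noteq> 0"
    using r(1) by (intro tendsto_imp_eventually_ne[of "poly r"]) (auto intro!: tendsto_intros)
  moreover have "\<forall>\<^sub>F s in at z. s \<noteq> z"
    by (simp add: eventually_at_filter)
  ultimately have "\<forall>\<^sub>F s in at z.
      f s = (s - z) ^ order z n * poly q s / ((s - z) ^ order z d * poly r s)"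
    by eventually_elim (simp add: f q(2) r(2))
  with q(1) r(1) show thesis
    by (intro that) (auto simp: rat_local_form_def)
qed

lemma rat_local_form_is_pole:
  assumes "rat_local_form f z k l q r" "k < l"
  shows "is_pole f z"
proof -
  have q: "poly q z \<noteq> 0" and r: "poly r z \<noteq> 0"
    and ev: "\<forall>\<^sub>F s in at z. f s = (s - z) ^ k * poly q s / ((s - z) ^ l * poly r s)"
    using assms(1) by (auto simp: rat_local_form_def)
  have "\<forall>\<^sub>F s in at z. f s = poly q s / poly r s * (1 / (s - z) ^ (l - k))"
    using ev eventually_neq_at_within[of z z UNIV]
  proof eventually_elim
    case (elim s)
    have "(s - z) ^ l = (s - z) ^ k * (s - z) ^ (l - k)"
      using \<open>k < l\<close> by (simp flip: power_add)
    with elim show ?case by simp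
  qed
  moreover have "is_pole (\<lambda>s. poly q s / poly r s * (1 / (s - z) ^ (l - k))) z"
  proof -
    have "((\<lambda>s. poly q s / poly r s) \<longlongrightarrow> poly q z / poly r z) (at z)"
      using r by (intro tendsto_intros) auto
    moreover have "filterlim (\<lambda>s. 1 / (s - z) ^ (l - k)) at_infinity (at z)"
      using is_pole_inverse_power[of "l - k" z] \<open>k < l\<close> by (simp add: is_pole_def)
    ultimately show ?thesis
      unfolding is_pole_def using q r
      by (intro tendsto_mult_filterlim_at_infinity[where c = "poly q z / poly r z"]) auto
  qed
  ultimately show ?thesis
    by (simp add: is_pole_cong)
qed

lemma rat_fun_poly_weight:
  assumes "q \<noteq> 0"
  shows "rat_fun (\<lambda>s. c * (s - z) ^ t * poly r s / poly q s)"
  unfolding rat_fun_def using assms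
  by (intro exI[of _ "smult c ([:- z, 1:] ^ t * r)"] exI[of _ q]) (simp add: poly_power)

lemma poly_weight_tendsto:
  fixes q r :: "complex poly"
  assumes "poly q z \<noteq> 0"
  shows "((\<lambda>s. c * (s - z) ^ t * poly r s / poly q s) \<longlongrightarrow> c * (z - z) ^ t * poly r z / poly q z) (at z)"
  by (intro tendsto_intros) (use assms in auto)

lemma rat_local_form_weight_mult:
  assumes "rat_local_form f z k l q r" "t + k = R + l"
  shows "\<forall>\<^sub>F s in at z. c * (s - z) ^ t * poly r s / poly q s * f s = c * (s - z) ^ R"
proof -
  have ev: "\<forall>\<^sub>F s in at z. f s = (s - z) ^ k * poly q s / ((s - z) ^ l * poly r s)"
    using assms(1) by (simp add: rat_local_form_def)
  have "\<forall>\<^sub>F s in at z. poly q s \<noteq> 0 \<and> poly r s \<noteq> 0"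
    using assms(1) unfolding rat_local_form_def
    by (intro eventually_conj tendsto_imp_eventually_ne[of "poly _"]) (auto intro!: tendsto_intros)
  with ev eventually_neq_at_within[of z z UNIV] show ?thesis
  proof eventually_elim
    case (elim s)
    have "c * (s - z) ^ t * poly r s / poly q s * f s = c * ((s - z) ^ t * (s - z) ^ k) / (s - z) ^ l"
      using elim by (simp add: field_simps)
    also have "\<dots> = c * ((s - z) ^ R * (s - z) ^ l) / (s - z) ^ l"
      using assms(2) by (simp flip: power_add)
    finally show ?case
      using elim by simp
  qed
qed

lemma filterlim_const_minus_at_infinity:
  "filterlim (\<lambda>s::complex. a - s) at_infinity at_infinity"
proof (subst filterlim_at_infinity[OF order.refl], intro allI impI)
  fix r :: real
  show "\<forall>\<^sub>F s in at_infinity. r \<le> norm (a - s)"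
    unfolding eventually_at_infinity
  proof (intro exI[of _ "r + norm a"] allI impI)
    fix s :: complex
    assume "r + norm a \<le> norm s"
    moreover have "norm s - norm a \<le> norm (s - a)"
      by (rule norm_triangle_ineq2)
    ultimately show "r \<le> norm (a - s)"
      by (simp add: norm_minus_commute)
  qed
qed

lemma one_plus_partial_fractions_poly_ratio:
  fixes B :: "'i set" and a e :: "'i \<Rightarrow> complex"
  assumes fin: "finite B"
  obtains n d :: "complex poly" where "n \<noteq> 0" "d \<noteq> 0"
    "\<And>s. poly d s \<noteq> 0 \<Longrightarrow> 1 + (\<Sum>l\<in>B. e l / (a l - s)) = poly n s / poly d s"
proof -
  define F where "F s = 1 + (\<Sum>l\<in>B. e l / (a l - s))" for s
  define d where "d = (\<Prod>l\<in>B. [:a l, -1:])"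
  define n where "n = d + (\<Sum>l\<in>B. smult (e l) (\<Prod>l'\<in>B - {l}. [:a l', -1:]))"
  have pd: "poly d s = (\<Prod>l\<in>B. a l - s)" for s
    unfolding d_def by (simp add: poly_prod)
  have F: "F s = poly n s / poly d s" if ds: "poly d s \<noteq> 0" for s
  proof -
    have "e l / (a l - s) = e l * (\<Prod>l'\<in>B - {l}. a l' - s) / poly d s" if "l \<in> B" for l
    proof -
      have split: "poly d s = (a l - s) * (\<Prod>l'\<in>B - {l}. a l' - s)"
        unfolding pd using fin that by (simp add: prod.remove)
      with ds show ?thesis
        by (simp add: split nonzero_mult_divide_mult_cancel_right)
    qed
    then have "(\<Sum>l\<in>B. e l / (a l - s)) = (\<Sum>l\<in>B. e l * (\<Prod>l'\<in>B - {l}. a l' - s)) / poly d s"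
      by (simp add: sum_divide_distrib)
    with ds show ?thesis
      unfolding F_def n_def by (simp add: poly_prod poly_sum field_simps)
  qed
  have d0: "d \<noteq> 0"
    unfolding d_def using fin by (simp add: prod_zero_iff)
  have n0: "n \<noteq> 0"
  proof
    assume "n = 0"
    \<comment> \<open>then \<open>F\<close> vanishes near infinity, whereas it tends to \<open>1\<close> there\<close>
    have "\<forall>\<^sub>F s in at_infinity. \<forall>l\<in>B. s \<noteq> a l"
      using fin by (intro eventually_ball_finite) (auto simp: eventually_not_equal_at_infinity)
    then have "\<forall>\<^sub>F s in at_infinity. F s = 0"
    proof eventually_elim
      case (elim s)
      then have "poly d s \<noteq> 0"
        using fin by (auto simp: pd)
      then show ?case
        by (simp add: F \<open>n = 0\<close>)
    qed
    then have "(F \<longlongrightarrow> 0) at_infinity"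
      by (simp add: tendsto_eventually)
    moreover have "((\<lambda>s. \<Sum>l\<in>B. e l / (a l - s)) \<longlongrightarrow> 0) at_infinity"
      by (intro tendsto_null_sum tendsto_divide_0[OF tendsto_const]
          filterlim_const_minus_at_infinity)
    then have "(F \<longlongrightarrow> 1) at_infinity"
      unfolding F_def using tendsto_add[OF tendsto_const, of _ 0 _ 1] by simp
    ultimately show False
      using tendsto_unique[OF trivial_limit_at_infinity] by fastforce
  qed
  show thesis
    using that n0 d0 F unfolding F_def by blast
qed

lemma tmat_mult_diagonal_left:
  assumes "\<forall>i'<p. \<forall>j<p. i' \<noteq> j \<longrightarrow> D i' j = (\<lambda>s. 0)" "i < p"
  shows "tmat_mult p D H i c s = D i i s * H i c s"
proof -
  have "tmat_mult p D H i c s = (\<Sum>l<p. if l = i then D i i s * H i c s else 0)"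
    unfolding tmat_mult_def using assms by (intro sum.cong) auto
  with assms(2) show ?thesis by simp
qed

lemma is_tm_zeroI_scaled_direction:
  assumes w: "\<forall>i<r. rat_fun (w i) \<and> (\<exists>c. (w i \<longlongrightarrow> c) (at z))"
    and w_nz: "j < r" "\<not> (w j \<longlongrightarrow> 0) (at z)"
    and scale: "\<forall>i<r. \<forall>c<n. \<forall>\<^sub>F s in at z. w i s * G i c s = (s - z) ^ R * (v i * H i c s)"
    and dir: "\<forall>c<n. ((\<lambda>s. \<Sum>i<r. v i * H i c s) \<longlongrightarrow> 0) (at z)"
  shows "is_tm_zero r n G z"
  unfolding is_tm_zero_def
proof (intro exI[of _ w] conjI allI impI)
  fix c
  assume "c < n"
  have "\<forall>\<^sub>F s in at z. \<forall>i\<in>{..<r}. w i s * G i c s = (s - z) ^ R * (v i * H i c s)"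
    using scale \<open>c < n\<close> by (intro eventually_ball_finite) auto
  then have "\<forall>\<^sub>F s in at z. (\<Sum>i<r. w i s * G i c s) = (s - z) ^ R * (\<Sum>i<r. v i * H i c s)"
    by eventually_elim (simp add: sum_distrib_left)
  moreover have "((\<lambda>s. (s - z) ^ R * (\<Sum>i<r. v i * H i c s)) \<longlongrightarrow> (z - z) ^ R * 0) (at z)"
    using dir \<open>c < n\<close> by (intro tendsto_intros) auto
  ultimately show "((\<lambda>s. \<Sum>i<r. w i s * G i c s) \<longlongrightarrow> 0) (at z)"
    by (simp add: tendsto_cong)
qed (use w w_nz in blast)+

lemma common_order_shift:
  fixes k l :: "'i \<Rightarrow> nat"
  assumes "finite S" "j \<in> S" "l j \<le> k j"
  obtains R t i0 where "\<And>i. i \<in> S \<Longrightarrow> t i + k i = R + l i" "i0 \<in> S" "t i0 = 0"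
proof -
  define g where "g i = int (k i) - int (l i)" for i
  define M where "M = Max (g ` S)"
  have g_le: "g i \<le> M" if "i \<in> S" for i
    unfolding M_def using assms(1) that by simp
  have "M \<in> g ` S"
    unfolding M_def using assms(1,2) by (intro Max_in) auto
  then obtain i0 where "i0 \<in> S" "g i0 = M"
    by blast
  moreover have "M \<ge> 0"
    using g_le[OF assms(2)] assms(3) by (simp add: g_def)
  then have "nat (M - g i) + k i = nat M + l i" if "i \<in> S" for i
    using g_le[OF that] by (simp add: g_def)
  ultimately show thesis
    by (intro that[of "\<lambda>i. nat (M - g i)" "nat M" i0]) auto
qed

lemma diagonal_cascade_keeps_left_zero:
  fixes D H :: "nat \<Rightarrow> nat \<Rightarrow> complex \<Rightarrow> complex"
  assumes diag: "\<forall>i<p. \<forall>j<p. i \<noteq> j \<longrightarrow> D i j = (\<lambda>s. 0)"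
    and rat: "\<forall>i<p. \<exists>n d. n \<noteq> 0 \<and> d \<noteq> 0 \<and> (\<forall>s. poly d s \<noteq> 0 \<longrightarrow> D i i s = poly n s / poly d s)"
    and j: "j < p" "v j \<noteq> 0" "\<not> is_pole (D j j) z"
    and dir: "\<forall>c<n. ((\<lambda>s. \<Sum>i<p. v i * H i c s) \<longlongrightarrow> 0) (at z)"
  shows "is_tm_zero p n (tmat_mult p D H) z"
proof -
  have "\<forall>i<p. \<exists>k l q r. rat_local_form (D i i) z k l q r"
    using rat poly_ratio_rat_local_form by metis
  then obtain k l q r where loc: "\<And>i. i < p \<Longrightarrow> rat_local_form (D i i) z (k i) (l i) (q i) (r i)"
    by metis
  then have q: "poly (q i) z \<noteq> 0" if "i < p" for i
    using that by (simp add: rat_local_form_def)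
  define S where "S = {i. i < p \<and> v i \<noteq> 0}"
  have "finite S" "j \<in> S"
    using j by (auto simp: S_def)
  moreover have "l j \<le> k j"
    using j loc rat_local_form_is_pole not_le by blast
  ultimately obtain R t i0 where shift: "\<And>i. i \<in> S \<Longrightarrow> t i + k i = R + l i"
    and "i0 \<in> S" "t i0 = 0"
    by (rule common_order_shift) blast
  then have "i0 < p" "v i0 \<noteq> 0"
    by (auto simp: S_def)
  define w where "w i = (\<lambda>s. v i * (s - z) ^ t i * poly (r i) s / poly (q i) s)" for i
  show ?thesis
  proof (rule is_tm_zeroI_scaled_direction[where w = w and j = i0 and R = R and v = v])
    show "\<forall>i<p. rat_fun (w i) \<and> (\<exists>c. (w i \<longlongrightarrow> c) (at z))"
    proof (intro allI impI conjI)
      fix i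
      assume "i < p"
      then have "q i \<noteq> 0"
        using q[OF \<open>i < p\<close>] by auto
      then show "rat_fun (w i)"
        unfolding w_def by (rule rat_fun_poly_weight)
      show "\<exists>c. (w i \<longlongrightarrow> c) (at z)"
        unfolding w_def using poly_weight_tendsto[OF q[OF \<open>i < p\<close>]] by blast
    qed
    have "v i0 * (z - z) ^ t i0 * poly (r i0) z / poly (q i0) z \<noteq> 0"
      using \<open>t i0 = 0\<close> \<open>v i0 \<noteq> 0\<close> loc[OF \<open>i0 < p\<close>] by (simp add: rat_local_form_def)
    moreover have "(w i0 \<longlongrightarrow> v i0 * (z - z) ^ t i0 * poly (r i0) z / poly (q i0) z) (at z)"
      unfolding w_def by (rule poly_weight_tendsto[OF q[OF \<open>i0 < p\<close>]])
    ultimately show "\<not> (w i0 \<longlongrightarrow> 0) (at z)"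
      using tendsto_unique[OF trivial_limit_at] by blast
    show "\<forall>i<p. \<forall>c<n. \<forall>\<^sub>F s in at z.
        w i s * tmat_mult p D H i c s = (s - z) ^ R * (v i * H i c s)"
    proof (intro allI impI)
      fix i c
      assume "i < p"
      show "\<forall>\<^sub>F s in at z. w i s * tmat_mult p D H i c s = (s - z) ^ R * (v i * H i c s)"
      proof (cases "v i = 0")
        case False
        with \<open>i < p\<close> have "t i + k i = R + l i"
          by (intro shift) (simp add: S_def)
        from rat_local_form_weight_mult[OF loc[OF \<open>i < p\<close>] this, of "v i"]
        show ?thesis
        proof eventually_elim
          case (elim s)
          have "w i s * tmat_mult p D H i c s = w i s * D i i s * H i c s"
            by (simp add: tmat_mult_diagonal_left[OF diag \<open>i < p\<close>])
          also have "\<dots> = (s - z) ^ R * (v i * H i c s)"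
            using elim by (simp add: w_def)
          finally show ?case .
        qed
      qed (simp add: w_def)
    qed
  qed (use dir \<open>i0 < p\<close> in auto)
qed

theorem theorem1:
  fixes p m k :: nat
    and Q P :: "nat \<Rightarrow> nat \<Rightarrow> complex \<Rightarrow> complex"
    and N :: "nat \<Rightarrow> nat \<Rightarrow> complex \<Rightarrow> complex"
    and a b c :: "nat \<Rightarrow> complex"
    and blk :: "nat \<Rightarrow> nat"
    and lam :: complex
    and v :: "nat \<Rightarrow> complex"
  assumes dsf: "dyn_struct_fun p m Q P"
    and simple: "only_simple_poles p (p + m) (IQP p Q P)"
    and no_common: "\<forall>z. is_tm_zero p (p + m) (IQP p Q P) z \<longrightarrow> \<not> is_tm_pole p (p + m) (IQP p Q P) z"
    and blk_range: "\<forall>l<k. blk l < p"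
    and min_b: "\<forall>l<k. b l \<noteq> 0"
    and min_c: "\<forall>l<k. c l \<noteq> 0"
    and min_a: "\<forall>l<k. \<forall>l'<k. l \<noteq> l' \<and> blk l = blk l' \<longrightarrow> a l \<noteq> a l'"
    and N_diag: "\<forall>j<p. N j j = (\<lambda>s. 1 + (\<Sum>l\<in>{l. l < k \<and> blk l = j}. c l * b l / (a l - s)))"
    and N_off: "\<forall>i<p. \<forall>j<p. i \<noteq> j \<longrightarrow> N i j = (\<lambda>s. 0)"
    and v_nz: "\<exists>j<p. v j \<noteq> 0"
    and zero_dir: "\<forall>col<p + m. ((\<lambda>s. \<Sum>i<p. v i * IQP p Q P i col s) \<longlongrightarrow> 0) (at lam)"
    and cancelled: "\<not> is_tm_zero p (p + m) (tmat_mult p N (IQP p Q P)) lam"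
  shows "\<forall>j<p. bool_pattern v j \<longrightarrow> is_pole (N j j) lam"
proof (intro allI impI, rule ccontr)
  fix j
  assume "j < p" "bool_pattern v j" "\<not> is_pole (N j j) lam"
  have "\<forall>i<p. \<exists>n d. n \<noteq> 0 \<and> d \<noteq> 0 \<and> (\<forall>s. poly d s \<noteq> 0 \<longrightarrow> N i i s = poly n s / poly d s)"
  proof (intro allI impI)
    fix i
    assume "i < p"
    obtain n d :: "complex poly" where "n \<noteq> 0" "d \<noteq> 0" "\<And>s. poly d s \<noteq> 0 \<Longrightarrow>
        1 + (\<Sum>l\<in>{l. l < k \<and> blk l = i}. c l * b l / (a l - s)) = poly n s / poly d s"
      using one_plus_partial_fractions_poly_ratio[of "{l. l < k \<and> blk l = i}"
          "\<lambda>l. c l * b l" a]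
      by auto
    with N_diag \<open>i < p\<close> show "\<exists>n d. n \<noteq> 0 \<and> d \<noteq> 0 \<and> (\<forall>s. poly d s \<noteq> 0 \<longrightarrow> N i i s = poly n s / poly d s)"
      by auto
  qed
  with N_off \<open>j < p\<close> \<open>bool_pattern v j\<close> \<open>\<not> is_pole (N j j) lam\<close> zero_dir
  have "is_tm_zero p (p + m) (tmat_mult p N (IQP p Q P)) lam"
    by (intro diagonal_cascade_keeps_left_zero) (auto simp: bool_pattern_def)
  with cancelled show False by simp
qed

end
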